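(* Let $n\geq 2$. Let $S$ be the semigroup with zero $0$ defined by the presentation with generators $x,y,z$ and defining relations $$xyz=x,\quad yzy=y,\quad zyz=z,$$ together with $w=0$ for each $w\in\{x^n,\ y^2,\ z^2,\ xz,\ yx,\ zx^{n-1}\}$, and let $A=S^1\{x,y\}$. Then $S$ is finite, $\mathrm{H}_{\mathcal{R}}(S)=n$ and $\mathrm{H}_{\mathcal{R}}(A)=2n-1$.
   Context: A presentation of a semigroup with zero $\langle X\mid R\rangle$ defines the quotient of the free semigroup with zero on $X$ by the congruence generated by $R$. $S^1$ denotes $S$ with an identity adjoined; $A=S^1\{x,y\}$ is the left ideal generated by $x,y$. Green's preorder: $a\leq_{\mathcal{R}} b$ iff $aS^1\subseteq bS^1$; $\mathcal{R}$ is the associated equivalence; the $\mathcal{R}$-height $\mathrm{H}_{\mathcal{R}}$ of a semigroup is the supremum of cardinalities of chains in its poset of $\mathcal{R}$-classes; for $A$ it is computed in the semigroup $A$ itself. *)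

theory Defs
  imports Main "HOL-Library.Extended_Nat"
begin

text \<open>Elements of the free semigroup with zero on generators of type 'a:
  the zero, or a nonempty word (first letter, remaining letters).\<close>
datatype 'a fsz = Zero | Word 'a "'a list"

fun fmul :: "'a fsz \<Rightarrow> 'a fsz \<Rightarrow> 'a fsz" where
  "fmul (Word a u) (Word b v) = Word a (u @ b # v)"
| "fmul _ _ = Zero"

text \<open>Nonempty word given as a list (the empty list is never used).\<close>
fun wd :: "'a list \<Rightarrow> 'a fsz" where
  "wd [] = Zero"
| "wd (a # u) = Word a u"

inductive_set cong_gen :: "('a fsz \<times> 'a fsz) set \<Rightarrow> ('a fsz \<times> 'a fsz) set"
  for R :: "('a fsz \<times> 'a fsz) set" where
  base: "p \<in> R \<Longrightarrow> p \<in> cong_gen R"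
| refl: "(u, u) \<in> cong_gen R"
| sym: "(u, v) \<in> cong_gen R \<Longrightarrow> (v, u) \<in> cong_gen R"
| trans: "(u, v) \<in> cong_gen R \<Longrightarrow> (v, w) \<in> cong_gen R \<Longrightarrow> (u, w) \<in> cong_gen R"
| mulr: "(u, v) \<in> cong_gen R \<Longrightarrow> (fmul u w, fmul v w) \<in> cong_gen R"
| mull: "(u, v) \<in> cong_gen R \<Longrightarrow> (fmul w u, fmul w v) \<in> cong_gen R"

definition pres_carrier :: "('a fsz \<times> 'a fsz) set \<Rightarrow> 'a fsz set set" where
  "pres_carrier R = UNIV // cong_gen R"

definition pres_mul :: "('a fsz \<times> 'a fsz) set \<Rightarrow> 'a fsz set \<Rightarrow> 'a fsz set \<Rightarrow> 'a fsz set" where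
  "pres_mul R P Q = cong_gen R `` {fmul (SOME p. p \<in> P) (SOME q. q \<in> Q)}"

definition pres_elem :: "('a fsz \<times> 'a fsz) set \<Rightarrow> 'a fsz \<Rightarrow> 'a fsz set" where
  "pres_elem R w = cong_gen R `` {w}"

text \<open>a \<le>_R b iff a S^1 \<subseteq> b S^1, i.e. a \<in> b S^1.\<close>
definition R_le :: "'s set \<Rightarrow> ('s \<Rightarrow> 's \<Rightarrow> 's) \<Rightarrow> 's \<Rightarrow> 's \<Rightarrow> bool" where
  "R_le C m a b \<longleftrightarrow> a = b \<or> (\<exists>c\<in>C. a = m b c)"

definition R_rel :: "'s set \<Rightarrow> ('s \<Rightarrow> 's \<Rightarrow> 's) \<Rightarrow> ('s \<times> 's) set" where
  "R_rel C m = {(a, b). a \<in> C \<and> b \<in> C \<and> R_le C m a b \<and> R_le C m b a}"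

definition R_classes :: "'s set \<Rightarrow> ('s \<Rightarrow> 's \<Rightarrow> 's) \<Rightarrow> 's set set" where
  "R_classes C m = C // R_rel C m"

definition R_class_le :: "'s set \<Rightarrow> ('s \<Rightarrow> 's \<Rightarrow> 's) \<Rightarrow> 's set \<Rightarrow> 's set \<Rightarrow> bool" where
  "R_class_le C m K L \<longleftrightarrow> (\<exists>a\<in>K. \<exists>b\<in>L. R_le C m a b)"

text \<open>R-height: supremum of cardinalities of chains of R-classes (an infinite chain
  contains finite chains of every size, so restricting to finite chains gives the same
  supremum in enat).\<close>
definition R_height :: "'s set \<Rightarrow> ('s \<Rightarrow> 's \<Rightarrow> 's) \<Rightarrow> enat" where
  "R_height C m = Sup {enat (card Ks) | Ks. Ks \<subseteq> R_classes C m \<and> finite Ks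
                        \<and> Complete_Partial_Order.chain (R_class_le C m) Ks}"

datatype gen = X | Y | Z

definition rels :: "nat \<Rightarrow> (gen fsz \<times> gen fsz) set" where
  "rels n = {(wd [X,Y,Z], wd [X]), (wd [Y,Z,Y], wd [Y]), (wd [Z,Y,Z], wd [Z]),
             (wd (replicate n X), Zero), (wd [Y,Y], Zero), (wd [Z,Z], Zero),
             (wd [X,Z], Zero), (wd [Y,X], Zero), (wd (Z # replicate (n - 1) X), Zero)}"

definition left_ideal_xy :: "nat \<Rightarrow> gen fsz set set" where
  "left_ideal_xy n = (let R = rels n; gx = pres_elem R (wd [X]); gy = pres_elem R (wd [Y])
     in {gx, gy} \<union> {pres_mul R s g | s g. s \<in> pres_carrier R \<and> g \<in> {gx, gy}})"

end

theory Submission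
  imports Defs
begin

text \<open>Every nonzero element of \<open>S\<close> has a unique normal form \<open>p x\<^sup>b y\<^sup>e\<close> with prefix
  \<open>p \<in> {1, yz, z}\<close>. Right multiplication by the generators acts on these normal forms (and zero),
  the action respects the defining relations, and every word is congruent to its normal form; so
  \<open>S\<close> is in bijection with the finitely many normal forms.

  Call the rank of an element one plus the number of \<open>x\<close>'s that can still be appended to it, where
  \<open>y\<close> counts as \<open>yz\<close>. Right multiplication never increases the rank, and keeps it only inside an
  \<open>\<R>\<close>-class. Hence a chain of \<open>\<R>\<close>-classes of \<open>S\<close> has at most \<open>n\<close> members, and
  \<open>x > x\<^sup>2 > \<dots> > x\<^sup>n = 0\<close> has \<open>n\<close>. In \<open>A\<close> the multipliers end in \<open>x\<close> or \<open>y\<close>, so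
  \<open>x\<^sup>b y\<close> lies strictly below \<open>x\<^sup>b\<close> (going back needs \<open>z\<close>). Doubling the rank and
  subtracting one for a trailing \<open>y\<close> gives a rank that strictly decreases in \<open>A\<close>; this bounds the
  chains by \<open>2n - 1\<close>, attained by \<open>x > xy > x\<^sup>2 > x\<^sup>2y > \<dots> > x\<^bsup>n-1\<^esup>y > x\<^sup>n = 0\<close>.\<close>

section \<open>Green's \<open>\<R>\<close>-order of a semigroup on a carrier\<close>

definition semigroup_on :: "'s set \<Rightarrow> ('s \<Rightarrow> 's \<Rightarrow> 's) \<Rightarrow> bool" where
  "semigroup_on C m \<longleftrightarrow> (\<forall>a\<in>C. \<forall>b\<in>C. m a b \<in> C)
     \<and> (\<forall>a\<in>C. \<forall>b\<in>C. \<forall>c\<in>C. m (m a b) c = m a (m b c))"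

lemma R_le_refl [simp]: "R_le C m a a"
  by (simp add: R_le_def)

lemma R_le_trans:
  assumes sg: "semigroup_on C m" and "c \<in> C" and ab: "R_le C m a b" and bc: "R_le C m b c"
  shows "R_le C m a c"
proof (cases "a = b")
  case True
  then show ?thesis using bc by simp
next
  case False
  then obtain d where d: "d \<in> C" "a = m b d" using ab unfolding R_le_def by blast
  show ?thesis
  proof (cases "b = c")
    case True
    then show ?thesis using d unfolding R_le_def by blast
  next
    case False
    then obtain e where e: "e \<in> C" "b = m c e" using bc unfolding R_le_def by blast
    have "a = m c (m e d)" and "m e d \<in> C"
      using sg \<open>c \<in> C\<close> d e unfolding semigroup_on_def by auto
    then show ?thesis unfolding R_le_def by blast
  qed
qed

lemma equiv_R_rel: "semigroup_on C m \<Longrightarrow> equiv C (R_rel C m)"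
  unfolding equiv_def refl_on_def sym_def trans_def R_rel_def
  by (blast intro: R_le_trans R_le_refl)

lemma rank_eq_on_R_class:
  fixes h :: "'s \<Rightarrow> 'b::order"
  assumes sg: "semigroup_on C m"
    and mono: "\<And>a b. a \<in> C \<Longrightarrow> b \<in> C \<Longrightarrow> R_le C m a b \<Longrightarrow> h a \<le> h b"
    and K: "K \<in> R_classes C m" and ab: "a \<in> K" "b \<in> K"
  shows "h a = h b"
proof -
  have "(a, b) \<in> R_rel C m"
    using in_quotient_imp_in_rel[OF equiv_R_rel[OF sg], of K a b] K ab
    unfolding R_classes_def by simp
  then have "a \<in> C" "b \<in> C" "R_le C m a b" "R_le C m b a" unfolding R_rel_def by simp_all
  then show ?thesis using mono[of a b] mono[of b a] by simp
qed

lemma R_class_subset: "semigroup_on C m \<Longrightarrow> K \<in> R_classes C m \<Longrightarrow> K \<subseteq> C"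
  unfolding R_classes_def by (rule in_quotient_imp_subset[OF equiv_R_rel])

lemma R_class_eq:
  assumes sg: "semigroup_on C m" and K: "K \<in> R_classes C m" and L: "L \<in> R_classes C m"
    and ab: "a \<in> K" "b \<in> L" "R_le C m a b" "R_le C m b a"
  shows "K = L"
proof -
  have "a \<in> C" "b \<in> C" using R_class_subset[OF sg] K L ab(1,2) by blast+
  then have "(a, b) \<in> R_rel C m" using ab(3,4) unfolding R_rel_def by blast
  then show ?thesis
    using quotient_eq_iff[OF equiv_R_rel[OF sg]] K L ab(1,2) unfolding R_classes_def by blast
qed

lemma R_height_le_rank:
  fixes h :: "'s \<Rightarrow> nat"
  assumes sg: "semigroup_on C m"
    and bound: "\<And>a. a \<in> C \<Longrightarrow> h a < N"
    and mono: "\<And>a b. a \<in> C \<Longrightarrow> b \<in> C \<Longrightarrow> R_le C m a b \<Longrightarrow> h a \<le> h b"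
    and strict: "\<And>a b. a \<in> C \<Longrightarrow> b \<in> C \<Longrightarrow> R_le C m a b \<Longrightarrow> h a = h b \<Longrightarrow> R_le C m b a"
  shows "R_height C m \<le> enat N"
  unfolding R_height_def
proof (rule Sup_least, clarify)
  fix Ks assume Ks: "Ks \<subseteq> R_classes C m" "finite Ks"
    "Complete_Partial_Order.chain (R_class_le C m) Ks"
  have eq: "equiv C (R_rel C m)" using sg by (rule equiv_R_rel)
  define rep :: "'s set \<Rightarrow> 's" where "rep K = (SOME a. a \<in> K)" for K
  have rep: "rep K \<in> K" "rep K \<in> C" if "K \<in> Ks" for K
  proof -
    have "K \<in> R_classes C m" using Ks(1) that by blast
    then have "K \<noteq> {}" "K \<subseteq> C"
      using in_quotient_imp_non_empty[OF eq] R_class_subset[OF sg] unfolding R_classes_def by auto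
    then have "rep K \<in> K" unfolding rep_def by (simp add: some_in_eq)
    then show "rep K \<in> K" "rep K \<in> C" using \<open>K \<subseteq> C\<close> by auto
  qed
  have same: "K = L" if K: "K \<in> Ks" and L: "L \<in> Ks" and hKL: "h (rep K) = h (rep L)"
    and KL: "R_class_le C m K L" for K L
  proof -
    obtain a b where ab: "a \<in> K" "b \<in> L" "R_le C m a b" using KL unfolding R_class_le_def by blast
    have KL_cls: "K \<in> R_classes C m" "L \<in> R_classes C m"
      using subsetD[OF Ks(1) K] subsetD[OF Ks(1) L] .
    have "h a = h (rep K)"
      by (rule rank_eq_on_R_class[where h = h, OF sg mono KL_cls(1) ab(1) rep(1)[OF K]])
    also have "\<dots> = h (rep L)" by (rule hKL)
    also have "\<dots> = h b"
      by (rule rank_eq_on_R_class[where h = h, OF sg mono KL_cls(2) rep(1)[OF L] ab(2)])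
    finally have "h a = h b" .
    moreover have "a \<in> C" "b \<in> C" using R_class_subset[OF sg] KL_cls ab(1,2) by blast+
    ultimately have "R_le C m b a" using strict ab(3) by blast
    then show "K = L" by (rule R_class_eq[OF sg KL_cls ab(1-3)])
  qed
  have inj: "inj_on (h \<circ> rep) Ks"
  proof (rule inj_onI)
    fix K L assume KL: "K \<in> Ks" "L \<in> Ks" "(h \<circ> rep) K = (h \<circ> rep) L"
    then have "R_class_le C m K L \<or> R_class_le C m L K"
      using Ks(3) unfolding chain_def by blast
    then show "K = L"
    proof
      assume "R_class_le C m K L"
      then show "K = L" using same KL by simp
    next
      assume "R_class_le C m L K"
      then have "L = K" using same[of L K] KL by simp
      then show "K = L" ..
    qed
  qed
  have img: "(h \<circ> rep) ` Ks \<subseteq> {..<N}"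
  proof
    fix v assume "v \<in> (h \<circ> rep) ` Ks"
    then obtain K where "K \<in> Ks" "v = h (rep K)" by auto
    then show "v \<in> {..<N}" using bound[OF rep(2)] by simp
  qed
  have "card Ks = card ((h \<circ> rep) ` Ks)" by (rule card_image[OF inj, symmetric])
  also have "\<dots> \<le> card {..<N}" using img by (intro card_mono) simp_all
  finally have "card Ks \<le> N" by simp
  then show "enat (card Ks) \<le> enat N" by simp
qed

lemma R_height_ge_chain:
  assumes sg: "semigroup_on C m"
    and mem: "\<And>k. k < K \<Longrightarrow> f k \<in> C"
    and step: "\<And>k. Suc k < K \<Longrightarrow> R_le C m (f (Suc k)) (f k)"
    and strict: "\<And>k. Suc k < K \<Longrightarrow> \<not> R_le C m (f k) (f (Suc k))"
  shows "enat K \<le> R_height C m"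
proof -
  have eq: "equiv C (R_rel C m)" using sg by (rule equiv_R_rel)
  have desc: "R_le C m (f j) (f i)" if "i \<le> j" "j < K" for i j
    using that
  proof (induction j)
    case (Suc j)
    show ?case
    proof (cases "i = Suc j")
      case False
      then have "R_le C m (f j) (f i)" using Suc by simp
      moreover have "f i \<in> C" using mem Suc.prems by simp
      ultimately show ?thesis using R_le_trans[OF sg] step Suc.prems by blast
    qed simp
  qed simp
  define cls where "cls k = R_rel C m `` {f k}" for k
  have "inj_on cls {..<K}"
  proof (rule linorder_inj_onI')
    fix i j assume ij: "i \<in> {..<K}" "j \<in> {..<K}" "i < j"
    show "cls i \<noteq> cls j"
    proof
      assume "cls i = cls j"
      then have "R_le C m (f i) (f j)"
        using eq_equiv_class_iff[OF eq] mem ij unfolding cls_def R_rel_def by blast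
      then have "R_le C m (f i) (f (Suc i))"
        using R_le_trans[OF sg mem] desc[of "Suc i" j] ij by auto
      then show False using strict ij by auto
    qed
  qed
  then have card: "card (cls ` {..<K}) = K" by (simp add: card_image)
  have sub: "cls ` {..<K} \<subseteq> R_classes C m"
    unfolding cls_def R_classes_def using mem by (auto intro: quotientI)
  have chain: "Complete_Partial_Order.chain (R_class_le C m) (cls ` {..<K})"
  proof (rule chainI)
    fix A B assume "A \<in> cls ` {..<K}" "B \<in> cls ` {..<K}"
    then obtain i j where ij: "i < K" "j < K" "A = cls i" "B = cls j" by blast
    then have "f i \<in> A" "f j \<in> B"
      using equiv_class_self[OF eq] mem unfolding cls_def by auto
    then show "R_class_le C m A B \<or> R_class_le C m B A"
      using desc ij(1,2) unfolding R_class_le_def by (meson nat_le_linear)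
  qed
  show ?thesis
    unfolding R_height_def
    by (intro Sup_upper CollectI exI[of _ "cls ` {..<K}"]) (simp add: card sub chain)
qed

section \<open>Presentations and partial right actions\<close>

lemma fmul_assoc: "fmul (fmul u v) w = fmul u (fmul v w)"
  by (cases u; cases v; cases w) auto

lemma fmul_wd: "u \<noteq> [] \<Longrightarrow> v \<noteq> [] \<Longrightarrow> fmul (wd u) (wd v) = wd (u @ v)"
  by (cases u; cases v) auto

lemma equiv_cong_gen: "equiv UNIV (cong_gen R)"
  unfolding equiv_def refl_on_def sym_def trans_def
  by (auto intro: cong_gen.refl cong_gen.sym cong_gen.trans)

lemma pres_elem_self: "u \<in> pres_elem R u"
  by (simp add: pres_elem_def cong_gen.refl)

lemma pres_elem_eq_iff: "pres_elem R u = pres_elem R v \<longleftrightarrow> (u, v) \<in> cong_gen R"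
  unfolding pres_elem_def using eq_equiv_class_iff[OF equiv_cong_gen] by blast

lemma pres_carrier_eq: "pres_carrier R = range (pres_elem R)"
  unfolding pres_carrier_def pres_elem_def quotient_def by blast

lemma pres_mul_pres_elem: "pres_mul R (pres_elem R u) (pres_elem R v) = pres_elem R (fmul u v)"
proof -
  define p q where "p = (SOME p. p \<in> pres_elem R u)" and "q = (SOME q. q \<in> pres_elem R v)"
  have "p \<in> pres_elem R u" "q \<in> pres_elem R v"
    unfolding p_def q_def by (meson someI pres_elem_self)+
  then have "(u, p) \<in> cong_gen R" "(v, q) \<in> cong_gen R"
    unfolding pres_elem_def by auto
  then have "(fmul u v, fmul p q) \<in> cong_gen R"
    by (blast intro: cong_gen.trans cong_gen.mulr cong_gen.mull)
  then show ?thesis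
    unfolding pres_mul_def p_def [symmetric] q_def [symmetric] pres_elem_eq_iff [symmetric]
    by (simp add: pres_elem_def)
qed

lemma semigroup_on_pres: "semigroup_on (pres_carrier R) (pres_mul R)"
  unfolding semigroup_on_def pres_carrier_eq by (auto simp: pres_mul_pres_elem fmul_assoc)

lemma R_le_pres_elem_iff:
  assumes "C \<subseteq> pres_carrier R"
  shows "R_le C (pres_mul R) (pres_elem R u) (pres_elem R v)
    \<longleftrightarrow> (u, v) \<in> cong_gen R \<or> (\<exists>w. pres_elem R w \<in> C \<and> (u, fmul v w) \<in> cong_gen R)"
proof -
  have "(\<exists>c\<in>C. pres_elem R u = pres_mul R (pres_elem R v) c)
      \<longleftrightarrow> (\<exists>w. pres_elem R w \<in> C \<and> pres_elem R u = pres_elem R (fmul v w))"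
    using assms unfolding pres_carrier_eq by (force simp: pres_mul_pres_elem)
  then show ?thesis unfolding R_le_def pres_elem_eq_iff by blast
qed

definition run :: "('s \<Rightarrow> 'a \<Rightarrow> 's option) \<Rightarrow> 's option \<Rightarrow> 'a list \<Rightarrow> 's option" where
  "run \<delta> = foldl (\<lambda>t c. Option.bind t (\<lambda>s. \<delta> s c))"

lemma run_Nil [simp]: "run \<delta> t [] = t"
  by (simp add: run_def)

lemma run_None [simp]: "run \<delta> None w = None"
  by (induction w) (simp_all add: run_def)

lemma run_Cons [simp]: "run \<delta> (Some s) (c # w) = run \<delta> (\<delta> s c) w"
  by (simp add: run_def)

lemma run_single: "run \<delta> t [c] = Option.bind t (\<lambda>s. \<delta> s c)"
  by (cases t) simp_all

lemma run_append: "run \<delta> t (u @ v) = run \<delta> (run \<delta> t u) v"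
  by (simp add: run_def)

fun run_fsz :: "('s \<Rightarrow> 'a \<Rightarrow> 's option) \<Rightarrow> 's option \<Rightarrow> 'a fsz \<Rightarrow> 's option" where
  "run_fsz \<delta> t Zero = None"
| "run_fsz \<delta> t (Word a u) = run \<delta> t (a # u)"

lemma run_fsz_None [simp]: "run_fsz \<delta> None w = None"
  by (cases w) simp_all

lemma run_fsz_wd: "w \<noteq> [] \<Longrightarrow> run_fsz \<delta> t (wd w) = run \<delta> t w"
  by (cases w) auto

lemma run_fsz_fmul: "run_fsz \<delta> t (fmul u v) = run_fsz \<delta> (run_fsz \<delta> t u) v"
  by (cases u; cases v) (simp_all add: run_append [symmetric] del: run_Cons)

lemma run_fsz_cong_gen:
  assumes rel: "\<And>l r t. (l, r) \<in> R \<Longrightarrow> run_fsz \<delta> t l = run_fsz \<delta> t r"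
    and uv: "(u, v) \<in> cong_gen R"
  shows "run_fsz \<delta> t u = run_fsz \<delta> t v"
proof -
  have "run_fsz \<delta> t (fst p) = run_fsz \<delta> t (snd p)" if "p \<in> cong_gen R" for p t
    using that
  proof (induction arbitrary: t rule: cong_gen.induct)
    case (base p)
    then show ?case using rel by (cases p) simp
  qed (simp_all add: run_fsz_fmul)
  then show ?thesis using uv by force
qed

text \<open>The right multiples of \<open>t\<close> by \<open>S\<^sup>1\<close>, described once via the identity and elements of the free
  semigroup with zero, once via possibly empty words and zero.\<close>

lemma ex_run_fsz_iff:
  "(c = t \<or> (\<exists>w. c = run_fsz \<delta> t w)) \<longleftrightarrow> (c = None \<or> (\<exists>w. c = run \<delta> t w))"
proof
  assume "c = t \<or> (\<exists>w. c = run_fsz \<delta> t w)"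
  then show "c = None \<or> (\<exists>w. c = run \<delta> t w)"
    by (metis run_Nil run_fsz.elims)
next
  assume "c = None \<or> (\<exists>w. c = run \<delta> t w)"
  then show "c = t \<or> (\<exists>w. c = run_fsz \<delta> t w)"
    by (metis run_Nil run_fsz.simps(1) run_fsz_wd)
qed

section \<open>Normal forms of \<open>S\<close>\<close>

text \<open>A state \<open>(p, b, e)\<close> stands for the word \<open>p x\<^sup>b y\<^sup>e\<close>, where the prefix \<open>p\<close> is empty,
  \<open>yz\<close> or \<open>z\<close>; \<^const>\<open>None\<close> stands for zero and \<open>one_nf\<close>, the empty word, for the identity of
  \<open>S\<^sup>1\<close>. Since \<open>x\<^sup>n = 0\<close> and \<open>z x\<^bsup>n-1\<^esup> = 0\<close>, at most \<open>max_xs n p\<close> letters \<open>x\<close> fit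
  after \<open>p\<close>. \<open>act n s c\<close> is the normal form of \<open>s c\<close>.\<close>

datatype prefix = NoPrefix | PrefixYZ | PrefixZ

type_synonym nf = "prefix \<times> nat \<times> bool"

definition max_xs :: "nat \<Rightarrow> prefix \<Rightarrow> nat" where
  "max_xs n p = (if p = NoPrefix then n - 1 else n - 2)"

fun act :: "nat \<Rightarrow> nf \<Rightarrow> gen \<Rightarrow> nf option" where
  "act n (p, b, False) X = (if b + 1 \<le> max_xs n p then Some (p, b + 1, False) else None)"
| "act n (p, b, False) Y =
     (if p = PrefixYZ \<and> b = 0 then Some (NoPrefix, 0, True) else Some (p, b, True))"
| "act n (p, b, False) Z = (if p = NoPrefix \<and> b = 0 then Some (PrefixZ, 0, False) else None)"
| "act n (p, b, True) Z =
     (if 0 < b then Some (p, b, False)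
      else if p = NoPrefix then Some (PrefixYZ, 0, False)
      else if p = PrefixZ then Some (PrefixZ, 0, False) else None)"
| "act n (p, b, True) _ = None"

definition one_nf :: nf where
  "one_nf = (NoPrefix, 0, False)"

fun word_of_prefix :: "prefix \<Rightarrow> gen list" where
  "word_of_prefix NoPrefix = []"
| "word_of_prefix PrefixYZ = [Y, Z]"
| "word_of_prefix PrefixZ = [Z]"

fun word_of_nf :: "nf \<Rightarrow> gen list" where
  "word_of_nf (p, b, e) = word_of_prefix p @ replicate b X @ (if e then [Y] else [])"

fun fsz_of_nf :: "nf option \<Rightarrow> gen fsz" where
  "fsz_of_nf None = Zero"
| "fsz_of_nf (Some s) = wd (word_of_nf s)"

fun is_nf :: "nat \<Rightarrow> nf \<Rightarrow> bool" where
  "is_nf n (p, b, e) \<longleftrightarrow> b \<le> max_xs n p \<and> (p, b, e) \<notin> {one_nf, (PrefixYZ, 0, True)}"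

definition nf_of :: "nat \<Rightarrow> gen fsz \<Rightarrow> nf option" where
  "nf_of n = run_fsz (act n) (Some one_nf)"

lemma UNIV_prefix: "UNIV = {NoPrefix, PrefixYZ, PrefixZ}"
  using prefix.exhaust by auto

lemma act_is_nf: "is_nf n s \<or> s = one_nf \<Longrightarrow> pred_option (is_nf n) (act n s c)"
  by (cases "(n, s, c)" rule: act.cases) (auto simp: one_nf_def max_xs_def)

lemma run_xpow:
  "0 < j \<Longrightarrow> run (act n) (Some (p, b, False)) (replicate j X)
     = (if b + j \<le> max_xs n p then Some (p, b + j, False) else None)"
proof (induction j arbitrary: b)
  case (Suc j)
  then show ?case by (cases "j = 0") auto
qed simp

lemma run_xpow_n: "2 \<le> n \<Longrightarrow> run (act n) t (replicate n X) = None"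
proof (cases t)
  case (Some s)
  assume n: "2 \<le> n"
  obtain p b e where "s = (p, b, e)" by (cases s)
  moreover have "replicate n X = X # replicate (n - 1) X" using n by (simp flip: replicate_Suc)
  ultimately show ?thesis using Some n run_xpow[of n n p b]
    by (cases e) (auto simp: max_xs_def)
qed simp

lemma run_z_xpow: "2 \<le> n \<Longrightarrow> run (act n) t (Z # replicate (n - 1) X) = None"
proof (cases t)
  case (Some s)
  assume n: "2 \<le> n"
  obtain p b e where "s = (p, b, e)" by (cases s)
  then show ?thesis using Some n run_xpow[of "n - 1" n]
    by (cases e; cases p) (auto simp: max_xs_def)
qed simp

lemma act_respects_short_rels:
  "run (act n) t [X, Y, Z] = run (act n) t [X] \<and> run (act n) t [Y, Z, Y] = run (act n) t [Y]
   \<and> run (act n) t [Z, Y, Z] = run (act n) t [Z]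
   \<and> run (act n) t [Y, Y] = None \<and> run (act n) t [Z, Z] = None
   \<and> run (act n) t [X, Z] = None \<and> run (act n) t [Y, X] = None"
proof (cases t)
  case (Some s)
  obtain p b e where "s = (p, b, e)" by (cases s)
  then show ?thesis using Some by (cases e; cases p) auto
qed simp

lemma act_respects_rels:
  assumes n: "2 \<le> n" and lr: "(l, r) \<in> rels n"
  shows "run_fsz (act n) t l = run_fsz (act n) t r"
  using lr run_xpow_n[OF n] run_z_xpow[OF n] n unfolding rels_def
  by (auto simp: run_fsz_wd act_respects_short_rels)

lemma nf_of_cong_gen: "2 \<le> n \<Longrightarrow> (u, v) \<in> cong_gen (rels n) \<Longrightarrow> nf_of n u = nf_of n v"
  unfolding nf_of_def by (rule run_fsz_cong_gen[OF act_respects_rels])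

lemma rel_in_context:
  "(wd l, wd r) \<in> R \<Longrightarrow> l \<noteq> [] \<Longrightarrow> r \<noteq> [] \<Longrightarrow> (wd (u @ l), wd (u @ r)) \<in> cong_gen R"
  using cong_gen.mull[OF cong_gen.base, of "wd l" "wd r" R "wd u"]
  by (cases "u = []") (auto simp: fmul_wd intro: cong_gen.base)

lemma rel_zero_in_context:
  "(wd l, Zero) \<in> R \<Longrightarrow> l \<noteq> [] \<Longrightarrow> (wd (u @ l), Zero) \<in> cong_gen R"
  using cong_gen.mull[OF cong_gen.base, of "wd l" Zero R "wd u"]
  by (cases "u = []") (auto simp: fmul_wd intro: cong_gen.base)

lemma rels_zero_in_context:
  assumes "2 \<le> n" and "l \<in> {replicate n X, Z # replicate (n - 1) X, [Y, Y], [Z, Z], [X, Z], [Y, X]}"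
  shows "(wd (u @ l), Zero) \<in> cong_gen (rels n)"
  using assms by (intro rel_zero_in_context) (auto simp: rels_def)

lemma word_of_nf_snoc_cong_False:
  assumes n: "2 \<le> n" and b: "b \<le> max_xs n p"
  shows "(wd (word_of_nf (p, b, False) @ [c]), fsz_of_nf (act n (p, b, False) c))
    \<in> cong_gen (rels n)"
proof -
  have xpow_snoc: "replicate k X @ [X] = replicate (Suc k) X" for k
    by (simp add: replicate_append_same)
  note zero = rels_zero_in_context[OF n]
  show ?thesis
  proof (cases c)
    case X
    show ?thesis
    proof (cases "b + 1 \<le> max_xs n p")
      case True
      then show ?thesis using X by (simp add: xpow_snoc cong_gen.refl)
    next
      case full: False
      then have "b = max_xs n p" using b by simp
      then show ?thesis using full X n zero[where u="[]" and l="replicate n X"]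
          zero[where u="[]" and l="Z # replicate (n - 1) X"]
          zero[where u="[Y]" and l="Z # replicate (n - 1) X"]
        by (cases p) (auto simp: max_xs_def xpow_snoc Suc_diff_Suc numeral_2_eq_2)
    qed
  next
    case Y
    have "(wd [Y, Z, Y], wd [Y]) \<in> cong_gen (rels n)" by (auto simp: rels_def intro: cong_gen.base)
    then show ?thesis using Y by (auto intro: cong_gen.refl)
  next
    case Z
    show ?thesis
    proof (cases b)
      case 0
      then show ?thesis using Z zero[where u="[]" and l="[Z, Z]"] zero[where u="[Y]" and l="[Z, Z]"]
        by (cases p) (auto intro: cong_gen.refl)
    next
      case (Suc k)
      then show ?thesis using Z zero[where u="word_of_prefix p @ replicate k X" and l="[X, Z]"]
        by (simp add: replicate_app_Cons_same)
    qed
  qed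
qed

lemma word_of_nf_snoc_cong_True:
  assumes n: "2 \<le> n" and s: "(p, b, True) \<noteq> (PrefixYZ, 0, True)"
  shows "(wd (word_of_nf (p, b, True) @ [c]), fsz_of_nf (act n (p, b, True) c))
    \<in> cong_gen (rels n)"
proof -
  note zero = rels_zero_in_context[OF n, where u="word_of_prefix p @ replicate b X"]
  show ?thesis
  proof (cases c)
    case Z
    show ?thesis
    proof (cases b)
      case 0
      have "(wd [Z, Y, Z], wd [Z]) \<in> cong_gen (rels n)"
        by (auto simp: rels_def intro: cong_gen.base)
      then show ?thesis using Z s 0 by (cases p) (auto intro: cong_gen.refl)
    next
      case (Suc k)
      have "(wd (word_of_prefix p @ replicate k X @ [X, Y, Z]),
          wd (word_of_prefix p @ replicate k X @ [X])) \<in> cong_gen (rels n)"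
        using rel_in_context[where u="word_of_prefix p @ replicate k X"] by (simp add: rels_def)
      then show ?thesis using Z Suc
        by (simp add: replicate_app_Cons_same replicate_append_same)
    qed
  qed (use zero in simp_all)
qed

lemma word_of_nf_snoc_cong:
  assumes n: "2 \<le> n" and s: "is_nf n s \<or> s = one_nf"
  shows "(wd (word_of_nf s @ [c]), fsz_of_nf (act n s c)) \<in> cong_gen (rels n)"
proof -
  obtain p b e where s_eq: "s = (p, b, e)" by (cases s)
  then show ?thesis
    using s word_of_nf_snoc_cong_False[OF n] word_of_nf_snoc_cong_True[OF n]
    by (cases e) (auto simp: one_nf_def max_xs_def)
qed

lemma run_is_nf: "pred_option (is_nf n) t \<Longrightarrow> pred_option (is_nf n) (run (act n) t w)"
proof (induction w arbitrary: t)
  case (Cons c w)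
  then show ?case using act_is_nf by (cases t) auto
qed simp

lemma run_one_is_nf: "w \<noteq> [] \<Longrightarrow> pred_option (is_nf n) (run (act n) (Some one_nf) w)"
  using act_is_nf run_is_nf by (cases w) auto

lemma nf_of_is_nf: "pred_option (is_nf n) (nf_of n u)"
  unfolding nf_of_def using run_one_is_nf by (cases u) (simp_all del: run_Cons)

lemma nf_of_fmul: "nf_of n (fmul u v) = run_fsz (act n) (nf_of n u) v"
  by (simp add: nf_of_def run_fsz_fmul)

lemma word_of_nf_ne_Nil: "is_nf n s \<Longrightarrow> word_of_nf s \<noteq> []"
  by (cases s) (auto simp: one_nf_def elim: word_of_prefix.elims)

lemma cong_fsz_of_nf_run:
  assumes n: "2 \<le> n"
  shows "w \<noteq> [] \<Longrightarrow> (wd w, fsz_of_nf (run (act n) (Some one_nf) w)) \<in> cong_gen (rels n)"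
proof (induction w rule: rev_induct)
  case (snoc c w)
  show ?case
  proof (cases "w = []")
    case True
    then show ?thesis using word_of_nf_snoc_cong[OF n, of one_nf c] by (simp add: one_nf_def)
  next
    case False
    let ?t = "run (act n) (Some one_nf) w"
    have "(fmul (wd w) (wd [c]), fmul (fsz_of_nf ?t) (wd [c])) \<in> cong_gen (rels n)"
      using snoc.IH False by (blast intro: cong_gen.mulr)
    then have "(wd (w @ [c]), fmul (fsz_of_nf ?t) (wd [c])) \<in> cong_gen (rels n)"
      using fmul_wd[OF False, of "[c]"] by simp
    moreover have "(fmul (fsz_of_nf ?t) (wd [c]), fsz_of_nf (run (act n) (Some one_nf) (w @ [c])))
        \<in> cong_gen (rels n)"
    proof (cases ?t)
      case None
      then show ?thesis by (simp add: run_append cong_gen.refl)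
    next
      case (Some s)
      then have s: "is_nf n s" using run_one_is_nf[OF False, of n] by simp
      then have "fmul (fsz_of_nf ?t) (wd [c]) = wd (word_of_nf s @ [c])"
        using Some fmul_wd[OF word_of_nf_ne_Nil[OF s], of "[c]"] by simp
      then show ?thesis using word_of_nf_snoc_cong[OF n, of s c] s Some by (simp add: run_append)
    qed
    ultimately show ?thesis by (rule cong_gen.trans)
  qed
qed simp

lemma cong_fsz_of_nf_of: "2 \<le> n \<Longrightarrow> (u, fsz_of_nf (nf_of n u)) \<in> cong_gen (rels n)"
proof (cases u)
  case (Word a us)
  assume "2 \<le> n"
  then show ?thesis
    using Word cong_fsz_of_nf_run[of n "a # us"] by (simp add: nf_of_def del: run_Cons)
qed (simp add: nf_of_def cong_gen.refl)

lemma cong_gen_iff_nf_of: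
  assumes n: "2 \<le> n"
  shows "(u, v) \<in> cong_gen (rels n) \<longleftrightarrow> nf_of n u = nf_of n v"
proof
  assume "nf_of n u = nf_of n v"
  then have "(u, fsz_of_nf (nf_of n v)) \<in> cong_gen (rels n)"
    using cong_fsz_of_nf_of[OF n, of u] by simp
  then show "(u, v) \<in> cong_gen (rels n)"
    using cong_gen.sym[OF cong_fsz_of_nf_of[OF n, of v]] by (rule cong_gen.trans)
qed (rule nf_of_cong_gen[OF n])

lemma finite_is_nf: "finite {t. pred_option (is_nf n) t}"
proof -
  have "{t. pred_option (is_nf n) t} \<subseteq> insert None (Some ` (UNIV \<times> {..n} \<times> UNIV))"
  proof
    fix t assume t: "t \<in> {t. pred_option (is_nf n) t}"
    show "t \<in> insert None (Some ` (UNIV \<times> {..n} \<times> UNIV))"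
    proof (cases t)
      case (Some s)
      obtain p b e where "s = (p, b, e)" by (cases s)
      moreover have "max_xs n p \<le> n" by (simp add: max_xs_def)
      ultimately show ?thesis using t Some by auto
    qed simp
  qed
  moreover have "finite ((UNIV :: prefix set) \<times> {..n} \<times> (UNIV :: bool set))"
    by (simp add: UNIV_prefix finite_cartesian_product)
  ultimately show ?thesis by (meson finite_imageI finite_insert finite_subset)
qed

lemma finite_pres_carrier:
  assumes n: "2 \<le> n"
  shows "finite (pres_carrier (rels n))"
proof (rule finite_surj[OF finite_is_nf])
  show "pres_carrier (rels n) \<subseteq> (pres_elem (rels n) \<circ> fsz_of_nf) ` {t. pred_option (is_nf n) t}"
  proof
    fix K assume "K \<in> pres_carrier (rels n)"
    then obtain u where "K = pres_elem (rels n) u" unfolding pres_carrier_eq by blast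
    then have "K = pres_elem (rels n) (fsz_of_nf (nf_of n u))"
      using cong_fsz_of_nf_of[OF n] pres_elem_eq_iff by blast
    then show "K \<in> (pres_elem (rels n) \<circ> fsz_of_nf) ` {t. pred_option (is_nf n) t}"
      using nf_of_is_nf by auto
  qed
qed

section \<open>The \<open>\<R>\<close>-height of \<open>S\<close>\<close>

text \<open>\<open>nf_le n c t\<close> says that \<open>c \<in> t S\<^sup>1\<close>: Green's preorder of \<open>S\<close> on normal forms.\<close>

definition nf_le :: "nat \<Rightarrow> nf option \<Rightarrow> nf option \<Rightarrow> bool" where
  "nf_le n c t \<longleftrightarrow> c = None \<or> (\<exists>w. c = run (act n) t w)"

definition nf_of_class :: "nat \<Rightarrow> gen fsz set \<Rightarrow> nf option" where
  "nf_of_class n K = the_elem (nf_of n ` K)"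

lemma nf_of_class_pres_elem: "2 \<le> n \<Longrightarrow> nf_of_class n (pres_elem (rels n) u) = nf_of n u"
proof -
  assume n: "2 \<le> n"
  have "nf_of n ` pres_elem (rels n) u = {nf_of n u}"
    using cong_gen_iff_nf_of[OF n] pres_elem_self unfolding pres_elem_def by auto
  then show ?thesis by (simp add: nf_of_class_def)
qed

lemma R_le_S_iff:
  assumes n: "2 \<le> n"
  shows "R_le (pres_carrier (rels n)) (pres_mul (rels n))
      (pres_elem (rels n) u) (pres_elem (rels n) v)
    \<longleftrightarrow> nf_le n (nf_of n u) (nf_of n v)"
  unfolding R_le_pres_elem_iff[OF subset_refl] cong_gen_iff_nf_of[OF n] nf_of_fmul nf_le_def
    ex_run_fsz_iff [symmetric]
  by (simp add: pres_carrier_eq)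

text \<open>The \<open>\<R>\<close>-class of a nonzero element is determined by its normal form without the trailing
  \<open>y\<close>, except that \<open>y\<close> is \<open>\<R>\<close>-equivalent to \<open>yz\<close>; \<open>r_class\<close> names it and \<open>rank\<close> counts
  the \<open>x\<close>'s that still fit, plus one.\<close>

fun rank :: "nat \<Rightarrow> nf option \<Rightarrow> nat" where
  "rank n None = 0"
| "rank n (Some (p, b, e)) = (if p = NoPrefix \<and> b = 0 then n - 1 else max_xs n p + 1 - b)"

fun r_class :: "nf \<Rightarrow> prefix \<times> nat" where
  "r_class (p, b, e) = (if p = NoPrefix \<and> b = 0 then (PrefixYZ, 0) else (p, b))"

fun swap_yz :: "gen \<Rightarrow> gen" where
  "swap_yz X = X"
| "swap_yz Y = Z"
| "swap_yz Z = Y"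

lemma rank_pos: "2 \<le> n \<Longrightarrow> is_nf n s \<Longrightarrow> 0 < rank n (Some s)"
  by (cases s) (auto simp: max_xs_def)

lemma rank_less: "2 \<le> n \<Longrightarrow> pred_option (is_nf n) t \<Longrightarrow> rank n t < n"
  by (cases "(n, t)" rule: rank.cases) (auto simp: max_xs_def one_nf_def)

lemma rank_act_le: "2 \<le> n \<Longrightarrow> is_nf n s \<Longrightarrow> rank n (act n s c) \<le> rank n (Some s)"
  by (cases "(n, s, c)" rule: act.cases) (auto simp: max_xs_def one_nf_def)

lemma rank_act_X: "2 \<le> n \<Longrightarrow> is_nf n s \<Longrightarrow> rank n (act n s X) < rank n (Some s)"
  by (cases "(n, s, X)" rule: act.cases) (auto simp: max_xs_def one_nf_def)

lemma rank_act_eq: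
  "is_nf n s \<Longrightarrow> act n s c = Some s' \<Longrightarrow> rank n (Some s') = rank n (Some s)
    \<Longrightarrow> r_class s' = r_class s \<and> act n s' (swap_yz c) = Some s"
  by (cases "(n, s, c)" rule: act.cases; cases "fst s")
    (auto simp: max_xs_def one_nf_def split: if_splits)

lemma rank_run_le:
  "2 \<le> n \<Longrightarrow> pred_option (is_nf n) t \<Longrightarrow> rank n (run (act n) t w) \<le> rank n t"
proof (induction w arbitrary: t)
  case (Cons c w)
  show ?case
  proof (cases t)
    case (Some s)
    then have "rank n (run (act n) (act n s c) w) \<le> rank n (act n s c)"
      using Cons act_is_nf[of n s c] by simp
    then show ?thesis using rank_act_le[of n s c] Cons.prems Some by simp
  qed simp
qed simp

lemma rank_run_eq:
  assumes n: "2 \<le> n"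
  shows "is_nf n s \<Longrightarrow> rank n (run (act n) (Some s) w) = rank n (Some s)
    \<Longrightarrow> \<exists>s'. run (act n) (Some s) w = Some s' \<and> r_class s' = r_class s
          \<and> (\<exists>w'. run (act n) (Some s') w' = Some s)"
proof (induction w arbitrary: s)
  case (Cons c w)
  show ?case
  proof (cases "act n s c")
    case None
    then show ?thesis using rank_pos[OF n Cons.prems(1)] Cons.prems(2) by simp
  next
    case (Some s1)
    have s1: "is_nf n s1" using act_is_nf[of n s c] Cons.prems(1) Some by auto
    have "rank n (run (act n) (Some s1) w) \<le> rank n (Some s1)"
      using rank_run_le[OF n] s1 by simp
    then have eq_c: "rank n (Some s1) = rank n (Some s)"
      and eq_w: "rank n (run (act n) (Some s1) w) = rank n (Some s1)"
      using rank_act_le[OF n Cons.prems(1), of c] Cons.prems(2) Some by simp_all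
    obtain s' w' where s': "run (act n) (Some s1) w = Some s'" "r_class s' = r_class s1"
      "run (act n) (Some s') w' = Some s1"
      using Cons.IH[OF s1 eq_w] by blast
    have "r_class s1 = r_class s" "act n s1 (swap_yz c) = Some s"
      using rank_act_eq[OF Cons.prems(1) Some eq_c] by auto
    then have "run (act n) (Some s') (w' @ [swap_yz c]) = Some s"
      using s'(3) by (simp add: run_append)
    then show ?thesis using s' Some \<open>r_class s1 = r_class s\<close> by auto
  qed
qed (metis run_Nil)

lemma nf_le_rank:
  "2 \<le> n \<Longrightarrow> pred_option (is_nf n) t \<Longrightarrow> nf_le n c t \<Longrightarrow> rank n c \<le> rank n t"
  unfolding nf_le_def using rank_run_le by auto

lemma nf_le_rank_eq:
  assumes n: "2 \<le> n" and s: "is_nf n s" and le: "nf_le n c (Some s)"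
    and eq: "rank n c = rank n (Some s)"
  shows "\<exists>s'. c = Some s' \<and> r_class s' = r_class s \<and> nf_le n (Some s) c"
proof -
  obtain w where "c = run (act n) (Some s) w"
    using le eq rank_pos[OF n s] unfolding nf_le_def by auto
  then show ?thesis using rank_run_eq[OF n s, of w] eq unfolding nf_le_def by metis
qed

lemma nf_le_antisym_rank:
  assumes n: "2 \<le> n" and t: "pred_option (is_nf n) t" and le: "nf_le n c t"
    and eq: "rank n c = rank n t"
  shows "nf_le n t c"
proof (cases t)
  case (Some s)
  then show ?thesis using nf_le_rank_eq[OF n, of s c] t le eq by auto
qed (simp add: nf_le_def)

lemma R_height_S_le:
  assumes n: "2 \<le> n"
  shows "R_height (pres_carrier (rels n)) (pres_mul (rels n)) \<le> enat n"
proof (rule R_height_le_rank[OF semigroup_on_pres, where h = "\<lambda>K. rank n (nf_of_class n K)"])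
  fix a assume "a \<in> pres_carrier (rels n)"
  then show "rank n (nf_of_class n a) < n"
    unfolding pres_carrier_eq using nf_of_class_pres_elem[OF n] rank_less[OF n nf_of_is_nf] by auto
next
  fix a b assume "a \<in> pres_carrier (rels n)" "b \<in> pres_carrier (rels n)"
    and ab: "R_le (pres_carrier (rels n)) (pres_mul (rels n)) a b"
  then obtain u v where "a = pres_elem (rels n) u" "b = pres_elem (rels n) v"
    unfolding pres_carrier_eq by blast
  then show "rank n (nf_of_class n a) \<le> rank n (nf_of_class n b)"
    using ab R_le_S_iff[OF n] nf_of_class_pres_elem[OF n] nf_le_rank[OF n nf_of_is_nf] by auto
next
  fix a b assume "a \<in> pres_carrier (rels n)" "b \<in> pres_carrier (rels n)"
    and ab: "R_le (pres_carrier (rels n)) (pres_mul (rels n)) a b"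
    and eq: "rank n (nf_of_class n a) = rank n (nf_of_class n b)"
  then obtain u v where uv: "a = pres_elem (rels n) u" "b = pres_elem (rels n) v"
    unfolding pres_carrier_eq by blast
  have "nf_le n (nf_of n u) (nf_of n v)" and "rank n (nf_of n u) = rank n (nf_of n v)"
    using ab eq uv R_le_S_iff[OF n] nf_of_class_pres_elem[OF n] by auto
  then have "nf_le n (nf_of n v) (nf_of n u)" by (rule nf_le_antisym_rank[OF n nf_of_is_nf])
  then show "R_le (pres_carrier (rels n)) (pres_mul (rels n)) b a"
    using uv R_le_S_iff[OF n] by simp
qed

lemma nf_of_xpow:
  "0 < j \<Longrightarrow> nf_of n (wd (replicate j X)) = (if j < n then Some (NoPrefix, j, False) else None)"
  using run_xpow[of j n NoPrefix 0] by (auto simp: nf_of_def run_fsz_wd one_nf_def max_xs_def)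

lemma rank_nf_of_xpow: "0 < j \<Longrightarrow> j \<le> n \<Longrightarrow> rank n (nf_of n (wd (replicate j X))) = n - j"
  by (simp add: nf_of_xpow max_xs_def)

lemma R_height_S_ge:
  assumes n: "2 \<le> n"
  shows "enat n \<le> R_height (pres_carrier (rels n)) (pres_mul (rels n))"
proof -
  let ?S = "pres_carrier (rels n)" and ?m = "pres_mul (rels n)"
    and ?x = "\<lambda>k. pres_elem (rels n) (wd (replicate (Suc k) X))"
  show ?thesis
  proof (rule R_height_ge_chain[OF semigroup_on_pres, where f = ?x])
    fix k
    show "?x k \<in> ?S" by (simp add: pres_carrier_eq)
    have "?x (Suc k) = ?m (?x k) (pres_elem (rels n) (wd [X]))"
      using fmul_wd[of "replicate (Suc k) X" "[X]"]
      by (simp add: pres_mul_pres_elem replicate_append_same)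
    then show "R_le ?S ?m (?x (Suc k)) (?x k)" unfolding R_le_def pres_carrier_eq by blast
    assume "Suc k < n"
    then have "rank n (nf_of n (wd (replicate (Suc (Suc k)) X)))
        < rank n (nf_of n (wd (replicate (Suc k) X)))"
      by (simp add: rank_nf_of_xpow del: replicate_Suc)
    then show "\<not> R_le ?S ?m (?x k) (?x (Suc k))"
      using R_le_S_iff[OF n] nf_le_rank[OF n nf_of_is_nf] by fastforce
  qed
qed

section \<open>The \<open>\<R>\<close>-height of the left ideal \<open>A\<close>\<close>

definition ends_in_xy :: "gen fsz \<Rightarrow> bool" where
  "ends_in_xy w \<longleftrightarrow> (\<exists>L\<in>{X, Y}. w = wd [L] \<or> (\<exists>u. w = fmul u (wd [L])))"

lemma ends_in_xy_snoc:
  assumes L: "L \<in> {X, Y}"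
  shows "ends_in_xy (wd (u @ [L]))"
proof (cases "u = []")
  case False
  then have "wd (u @ [L]) = fmul (wd u) (wd [L])" by (intro fmul_wd [symmetric]) simp_all
  then show ?thesis using L unfolding ends_in_xy_def by blast
qed (use L in \<open>auto simp: ends_in_xy_def\<close>)

lemma ends_in_xy_fmul: "ends_in_xy v \<Longrightarrow> ends_in_xy (fmul u v)"
  unfolding ends_in_xy_def by (metis fmul_assoc)

lemma left_ideal_xy_eq: "left_ideal_xy n = pres_elem (rels n) ` {w. ends_in_xy w}"
proof
  let ?I = "pres_elem (rels n) ` {w. ends_in_xy w}"
  have gen: "pres_elem (rels n) (wd [L]) \<in> ?I" if "L \<in> {X, Y}" for L
    using that unfolding ends_in_xy_def by blast
  have mul: "pres_mul (rels n) a (pres_elem (rels n) (wd [L])) \<in> ?I"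
    if a: "a \<in> pres_carrier (rels n)" and L: "L \<in> {X, Y}" for a L
  proof -
    obtain u where "a = pres_elem (rels n) u" using a unfolding pres_carrier_eq by blast
    then show ?thesis using L unfolding ends_in_xy_def by (auto simp: pres_mul_pres_elem)
  qed
  show "left_ideal_xy n \<subseteq> ?I"
    using gen mul unfolding left_ideal_xy_def Let_def by (auto simp: pres_elem_def)
next
  show "pres_elem (rels n) ` {w. ends_in_xy w} \<subseteq> left_ideal_xy n"
  proof
    fix K assume "K \<in> pres_elem (rels n) ` {w. ends_in_xy w}"
    then obtain L w where L: "L \<in> {X, Y}" and K: "K = pres_elem (rels n) w"
      and "w = wd [L] \<or> (\<exists>u. w = fmul u (wd [L]))"
      unfolding ends_in_xy_def by blast
    then consider "K = pres_elem (rels n) (wd [L])"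
      | u where "K = pres_mul (rels n) (pres_elem (rels n) u) (pres_elem (rels n) (wd [L]))"
      by (auto simp: pres_mul_pres_elem)
    then show "K \<in> left_ideal_xy n"
      using L unfolding left_ideal_xy_def Let_def pres_carrier_eq by cases blast+
  qed
qed

lemma left_ideal_xy_subset: "left_ideal_xy n \<subseteq> pres_carrier (rels n)"
  by (auto simp: left_ideal_xy_eq pres_carrier_eq)

lemma pres_mul_left_ideal_xy:
  assumes "a \<in> left_ideal_xy n" "b \<in> left_ideal_xy n"
  shows "pres_mul (rels n) a b \<in> left_ideal_xy n"
proof -
  obtain u v where "a = pres_elem (rels n) u" "b = pres_elem (rels n) v" "ends_in_xy v"
    using assms unfolding left_ideal_xy_eq by blast
  then show ?thesis unfolding left_ideal_xy_eq by (simp add: pres_mul_pres_elem ends_in_xy_fmul)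
qed

lemma semigroup_on_left_ideal_xy: "semigroup_on (left_ideal_xy n) (pres_mul (rels n))"
  using semigroup_on_pres[of "rels n"] left_ideal_xy_subset[of n] pres_mul_left_ideal_xy[of _ n]
  unfolding semigroup_on_def by blast

lemma R_le_A_iff:
  assumes n: "2 \<le> n"
  shows "R_le (left_ideal_xy n) (pres_mul (rels n)) (pres_elem (rels n) u) (pres_elem (rels n) v)
    \<longleftrightarrow> nf_of n u = nf_of n v \<or> (\<exists>w. ends_in_xy w \<and> nf_of n u = run_fsz (act n) (nf_of n v) w)"
proof -
  have "(\<exists>w. pres_elem (rels n) w \<in> left_ideal_xy n \<and> nf_of n u = run_fsz (act n) (nf_of n v) w)
      \<longleftrightarrow> (\<exists>w. ends_in_xy w \<and> nf_of n u = run_fsz (act n) (nf_of n v) w)" (is "?l \<longleftrightarrow> ?r")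
  proof
    assume ?l
    then obtain w w' where w: "nf_of n u = run_fsz (act n) (nf_of n v) w" "ends_in_xy w'"
      "pres_elem (rels n) w = pres_elem (rels n) w'"
      unfolding left_ideal_xy_eq by auto
    then have "nf_of n w = nf_of n w'" using pres_elem_eq_iff cong_gen_iff_nf_of[OF n] by blast
    then have "nf_of n (fmul v w) = nf_of n (fmul v w')"
      using cong_gen.mull cong_gen_iff_nf_of[OF n] by blast
    then show ?r using w nf_of_fmul by metis
  qed (auto simp: left_ideal_xy_eq)
  then show ?thesis
    unfolding R_le_pres_elem_iff[OF left_ideal_xy_subset] cong_gen_iff_nf_of[OF n] nf_of_fmul
    by blast
qed

lemma nf_le_is_nf: "pred_option (is_nf n) t \<Longrightarrow> nf_le n c t \<Longrightarrow> pred_option (is_nf n) c"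
  unfolding nf_le_def using run_is_nf by auto

lemma nf_le_act:
  assumes "nf_le n c t"
  shows "nf_le n (Option.bind c (\<lambda>s. act n s L)) t"
proof (cases c)
  case (Some s)
  then obtain w where "c = run (act n) t w" using assms unfolding nf_le_def by auto
  then have "Option.bind c (\<lambda>s. act n s L) = run (act n) t (w @ [L])"
    by (simp add: run_append run_single)
  then show ?thesis unfolding nf_le_def by blast
qed (simp add: nf_le_def)

lemma run_fsz_ends_in_xy:
  assumes "ends_in_xy w"
  shows "\<exists>c L. L \<in> {X, Y} \<and> nf_le n c t \<and> run_fsz (act n) t w = Option.bind c (\<lambda>s. act n s L)"
proof -
  obtain L where L: "L \<in> {X, Y}" and "w = wd [L] \<or> (\<exists>u. w = fmul u (wd [L]))"
    using assms unfolding ends_in_xy_def by blast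
  then consider "w = wd [L]" | u where "w = fmul u (wd [L])" by blast
  then show ?thesis
  proof cases
    case 1
    have "nf_le n t t" unfolding nf_le_def by (metis run_Nil)
    then show ?thesis using 1 L by (auto simp: run_single simp del: run_Cons)
  next
    case 2
    have "nf_le n (run_fsz (act n) t u) t" unfolding nf_le_def using ex_run_fsz_iff by blast
    then show ?thesis using 2 L by (auto simp: run_fsz_fmul run_single simp del: run_Cons)
  qed
qed

text \<open>Within \<open>A\<close> the \<open>\<R>\<close>-class \<open>{x\<^sup>b, x\<^sup>b y}\<close> of \<open>S\<close> splits into two, since
  \<open>x\<^sup>b = x\<^sup>b y z\<close> needs a multiplier ending in \<open>z\<close>.\<close>

fun rank_A :: "nat \<Rightarrow> nf option \<Rightarrow> nat" where
  "rank_A n None = 0"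
| "rank_A n (Some (p, b, e)) = 2 * rank n (Some (p, b, e)) - (if e then 1 else 0)"

lemma rank_A_bounds: "rank_A n t \<le> 2 * rank n t" "2 * rank n t - 1 \<le> rank_A n t"
  by (cases "(n, t)" rule: rank_A.cases; simp)+

lemma act_Y_ends_in_y: "act n s Y = Some (p, b, e) \<Longrightarrow> e"
  by (cases "(n, s, Y)" rule: act.cases) (auto split: if_splits)

lemma r_class_inj_on_y:
  "is_nf n (p, b, True) \<Longrightarrow> is_nf n (p', b', True) \<Longrightarrow> r_class (p, b, True) = r_class (p', b', True)
    \<Longrightarrow> (p, b) = (p', b')"
  by (auto simp: one_nf_def split: if_splits)

lemma rank_A_act_X:
  assumes n: "2 \<le> n" and s: "is_nf n s" and le: "nf_le n c (Some s)"
  shows "rank_A n (Option.bind c (\<lambda>s. act n s X)) < rank_A n (Some s)"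
proof -
  have "rank n (Option.bind c (\<lambda>s. act n s X)) < rank n (Some s)"
  proof (cases c)
    case None
    then show ?thesis using rank_pos[OF n s] by simp
  next
    case (Some s1)
    then have "is_nf n s1" using nf_le_is_nf[of n "Some s" c] le s by simp
    then show ?thesis using rank_act_X[OF n] nf_le_rank[OF n _ le] s Some by fastforce
  qed
  then show ?thesis
    using rank_A_bounds[of n "Option.bind c (\<lambda>s. act n s X)"] rank_A_bounds[of n "Some s"]
    by linarith
qed

lemma rank_A_act_Y:
  assumes n: "2 \<le> n" and s: "is_nf n s" and le: "nf_le n c (Some s)"
  defines "r \<equiv> Option.bind c (\<lambda>s. act n s Y)"
  shows "rank_A n r \<le> rank_A n (Some s) \<and> (rank_A n r = rank_A n (Some s) \<longrightarrow> r = Some s)"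
proof (cases r)
  case None
  then show ?thesis using rank_pos[OF n s] rank_A_bounds(2)[of n "Some s"] by auto
next
  case (Some s2)
  obtain p b e where s2: "s2 = (p, b, e)" by (cases s2)
  have e: e using Some s2 act_Y_ends_in_y unfolding r_def by (cases c) auto
  have le_r: "nf_le n r (Some s)" unfolding r_def using le by (rule nf_le_act)
  have rank_r: "rank n r \<le> rank n (Some s)" using nf_le_rank[OF n _ le_r] s by simp
  have rank_A_r: "rank_A n r = 2 * rank n r - 1" using Some s2 e by simp
  have "r = Some s" if eq: "rank_A n r = rank_A n (Some s)"
  proof -
    obtain p' b' e' where s': "s = (p', b', e')" by (cases s)
    have "rank n r = rank n (Some s)" and e': e'
      using eq rank_r rank_A_r rank_A_bounds[of n "Some s"] rank_pos[OF n s] s'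
      by (auto split: if_splits)
    then have "r_class s2 = r_class s" using nf_le_rank_eq[OF n s le_r] Some by auto
    moreover have "is_nf n s2" using nf_le_is_nf[of n "Some s" r] le_r s Some by simp
    ultimately show ?thesis using r_class_inj_on_y[of n p b p' b'] s s' s2 e e' Some by auto
  qed
  then show ?thesis using rank_r rank_A_r rank_A_bounds(2)[of n "Some s"] by linarith
qed

lemma rank_A_run_ends_in_xy:
  assumes n: "2 \<le> n" and t: "pred_option (is_nf n) t" and w: "ends_in_xy w"
  shows "rank_A n (run_fsz (act n) t w) \<le> rank_A n t
    \<and> (rank_A n (run_fsz (act n) t w) = rank_A n t \<longrightarrow> run_fsz (act n) t w = t)"
proof (cases t)
  case (Some s)
  then have s: "is_nf n s" using t by simp
  obtain c L where L: "L \<in> {X, Y}" and le: "nf_le n c t"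
    and run: "run_fsz (act n) t w = Option.bind c (\<lambda>s. act n s L)"
    using run_fsz_ends_in_xy[OF w] by blast
  show ?thesis
  proof (cases "L = X")
    case True
    then show ?thesis using rank_A_act_X[OF n s] le Some run by fastforce
  next
    case False
    then show ?thesis using rank_A_act_Y[OF n s] le Some run L by auto
  qed
qed simp

lemma R_le_A_rank_A:
  assumes n: "2 \<le> n"
    and "R_le (left_ideal_xy n) (pres_mul (rels n)) (pres_elem (rels n) u) (pres_elem (rels n) v)"
  shows "rank_A n (nf_of n u) \<le> rank_A n (nf_of n v)
    \<and> (rank_A n (nf_of n u) = rank_A n (nf_of n v) \<longrightarrow> nf_of n u = nf_of n v)"
  using assms(2) R_le_A_iff[OF n] rank_A_run_ends_in_xy[OF n nf_of_is_nf] by auto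

lemma R_height_A_le:
  assumes n: "2 \<le> n"
  shows "R_height (left_ideal_xy n) (pres_mul (rels n)) \<le> enat (2 * n - 1)"
proof (rule R_height_le_rank[OF semigroup_on_left_ideal_xy,
      where h = "\<lambda>K. rank_A n (nf_of_class n K)"])
  fix a assume "a \<in> left_ideal_xy n"
  then obtain u where "a = pres_elem (rels n) u" unfolding left_ideal_xy_eq by blast
  then show "rank_A n (nf_of_class n a) < 2 * n - 1"
    using nf_of_class_pres_elem[OF n] rank_less[OF n nf_of_is_nf, of u]
      rank_A_bounds(1)[of n "nf_of n u"]
    by simp
next
  fix a b assume "a \<in> left_ideal_xy n" "b \<in> left_ideal_xy n"
    and ab: "R_le (left_ideal_xy n) (pres_mul (rels n)) a b"
  then obtain u v where uv: "a = pres_elem (rels n) u" "b = pres_elem (rels n) v"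
    unfolding left_ideal_xy_eq by blast
  show "rank_A n (nf_of_class n a) \<le> rank_A n (nf_of_class n b)"
    using R_le_A_rank_A[OF n] ab uv nf_of_class_pres_elem[OF n] by simp
  assume "rank_A n (nf_of_class n a) = rank_A n (nf_of_class n b)"
  then have "nf_of n u = nf_of n v"
    using R_le_A_rank_A[OF n] ab uv nf_of_class_pres_elem[OF n] by simp
  then have "a = b" unfolding uv pres_elem_eq_iff cong_gen_iff_nf_of[OF n] .
  then show "R_le (left_ideal_xy n) (pres_mul (rels n)) b a" by simp
qed

definition xy_chain :: "nat \<Rightarrow> gen list" where
  "xy_chain k = replicate (Suc (k div 2)) X @ (if odd k then [Y] else [])"

lemma nf_of_xy_chain:
  assumes "k < 2 * n - 1"
  shows "nf_of n (wd (xy_chain k))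
    = (if k = 2 * n - 2 then None else Some (NoPrefix, k div 2 + 1, odd k))"
proof -
  have "nf_of n (wd (xy_chain k))
      = run (act n) (nf_of n (wd (replicate (Suc (k div 2)) X))) (if odd k then [Y] else [])"
    by (simp add: xy_chain_def nf_of_def run_fsz_wd run_append del: replicate_Suc)
  also have "\<dots> = run (act n)
      (if Suc (k div 2) < n then Some (NoPrefix, Suc (k div 2), False) else None)
      (if odd k then [Y] else [])"
    unfolding nf_of_xpow[OF zero_less_Suc] ..
  finally show ?thesis using assms by auto
qed

lemma rank_A_nf_of_xy_chain:
  "k < 2 * n - 1 \<Longrightarrow> rank_A n (nf_of n (wd (xy_chain k))) = 2 * n - 2 - k"
  by (auto simp: nf_of_xy_chain max_xs_def) presburger+

lemma nf_of_xy_chain_Suc: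
  assumes "Suc k < 2 * n - 1"
  shows "nf_of n (wd (xy_chain (Suc k)))
    = run_fsz (act n) (nf_of n (wd (xy_chain k))) (wd (if odd k then [Z, X] else [Y]))"
  using assms by (auto simp: nf_of_xy_chain run_fsz_wd max_xs_def) presburger+

lemma ends_in_xy_xy_chain: "ends_in_xy (wd (xy_chain k))"
proof -
  have "xy_chain k
      = replicate (if odd k then Suc (k div 2) else k div 2) X @ [if odd k then Y else X]"
    by (simp add: xy_chain_def replicate_append_same)
  moreover have "(if odd k then Y else X) \<in> {X, Y}" by simp
  ultimately show ?thesis using ends_in_xy_snoc by metis
qed

lemma R_height_A_ge:
  assumes n: "2 \<le> n"
  shows "enat (2 * n - 1) \<le> R_height (left_ideal_xy n) (pres_mul (rels n))"
proof -
  let ?A = "left_ideal_xy n" and ?m = "pres_mul (rels n)"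
    and ?x = "\<lambda>k. pres_elem (rels n) (wd (xy_chain k))"
  show ?thesis
  proof (rule R_height_ge_chain[OF semigroup_on_left_ideal_xy, where f = ?x])
    fix k
    show "?x k \<in> ?A" unfolding left_ideal_xy_eq using ends_in_xy_xy_chain by blast
    assume k: "Suc k < 2 * n - 1"
    have "ends_in_xy (wd (if odd k then [Z, X] else [Y]))"
      using ends_in_xy_snoc[of X "[Z]"] ends_in_xy_snoc[of Y "[]"] by simp
    then show "R_le ?A ?m (?x (Suc k)) (?x k)"
      using R_le_A_iff[OF n] nf_of_xy_chain_Suc[OF k] by blast
    have "rank_A n (nf_of n (wd (xy_chain (Suc k)))) < rank_A n (nf_of n (wd (xy_chain k)))"
      using k by (simp add: rank_A_nf_of_xy_chain)
    then show "\<not> R_le ?A ?m (?x k) (?x (Suc k))"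
      using R_le_A_rank_A[OF n] by fastforce
  qed
qed

theorem theorem4p10:
  fixes n :: nat
  assumes "n \<ge> 2"
  shows "finite (pres_carrier (rels n))
       \<and> R_height (pres_carrier (rels n)) (pres_mul (rels n)) = enat n
       \<and> R_height (left_ideal_xy n) (pres_mul (rels n)) = enat (2 * n - 1)"
  using finite_pres_carrier[OF assms] R_height_S_le[OF assms] R_height_S_ge[OF assms]
    R_height_A_le[OF assms] R_height_A_ge[OF assms]
  by (simp add: antisym)

end
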